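(* For single-item prophet secretary with independent nonnegative values $v_1,\dots,v_n$ of finite expectation satisfying $\sum_{i=1}^n\Pr[v_i>0]\le1$, there exists a fixed-threshold algorithm (with randomized tie-breaking at the threshold) whose expected accepted value is at least $(1-1/e)\sum_{i=1}^n\mathbb{E}[v_i]$.
   Context: Single-item prophet secretary: buyer $i$ has value $v_i$, independent across buyers, and arrives at an independent uniform time $T_i\in[0,1]$. A fixed-threshold algorithm with threshold $\tau$ and tie probability $\theta\in[0,1]$ gives the item to the first arriving buyer whose value exceeds $\tau$, or equals $\tau$ and wins an independent coin of bias $\theta$; its value is that buyer's value ($0$ if none). *)

theory Defs
  imports "HOL-Probability.Probability"
begin

definition arrival_dist :: "real measure" where
  "arrival_dist = uniform_measure lborel {0..1}"

definition ps_space ::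
  "nat \<Rightarrow> (nat \<Rightarrow> real measure) \<Rightarrow> real \<Rightarrow>
     ((nat \<Rightarrow> real) \<times> (nat \<Rightarrow> real) \<times> (nat \<Rightarrow> bool)) measure" where
  "ps_space n D \<theta> =
     (PiM {..<n} D) \<Otimes>\<^sub>M
       ((PiM {..<n} (\<lambda>_. arrival_dist)) \<Otimes>\<^sub>M
        (PiM {..<n} (\<lambda>_. measure_pmf (bernoulli_pmf \<theta>))))"

definition ft_accepting ::
  "nat \<Rightarrow> real \<Rightarrow> (nat \<Rightarrow> real) \<Rightarrow> (nat \<Rightarrow> bool) \<Rightarrow> nat set" where
  "ft_accepting n \<tau> v c = {i\<in>{..<n}. \<tau> < v i \<or> (v i = \<tau> \<and> c i)}"

text \<open>Value obtained by the fixed-threshold algorithm: the value of the first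
  arriving accepting buyer (0 if none; ties in arrival times, a null event, give 0).\<close>
definition ft_value ::
  "nat \<Rightarrow> real \<Rightarrow> (nat \<Rightarrow> real) \<times> (nat \<Rightarrow> real) \<times> (nat \<Rightarrow> bool) \<Rightarrow> real" where
  "ft_value n \<tau> \<omega> =
     (case \<omega> of (v, t, c) \<Rightarrow>
        (\<Sum>i\<in>ft_accepting n \<tau> v c.
           if (\<forall>j\<in>ft_accepting n \<tau> v c. j \<noteq> i \<longrightarrow> t i < t j) then v i else 0))"

end

theory Submission
  imports Defs
begin

text \<open>
  A buyer of value x passes the threshold test with probability a(x) (1 above tau, theta at tau),
  independently of everything else; let q_j = E a(v_j).  A passing buyer i arriving at time y
  wins iff no other buyer passes and arrives earlier, which has probability
  prod_{j ~= i} (1 - q_j y).  So the algorithm earns sum_i E[v_i a(v_i)] W_i with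
  W_i = int_0^1 prod_{j ~= i} (1 - q_j y) dy, and sum_i q_i W_i = 1 - prod_j (1 - q_j) is an
  instance of the fundamental theorem of calculus.

  Choose tau and theta with prod_j (1 - q_j) = 1/e (or tau = 0 if this product is already at
  least 1/e at tau = 0).  Then W_i >= int_0^1 e^-y dy = 1 - 1/e by convexity, and writing
  E[v_i a(v_i)] = tau q_i + E(v_i - tau)^+ the algorithm earns at least
  (1 - 1/e) (tau + sum_i E(v_i - tau)^+).  This dominates (1 - 1/e) sum_i E v_i, because
  v_i <= tau [v_i > 0] + (v_i - tau)^+ and sum_i Pr[v_i > 0] <= 1.
\<close>

lemma triple_product_nn_integral:
  assumes "sigma_finite_measure A" "sigma_finite_measure B" "sigma_finite_measure C"
    and F: "(\<lambda>x. F (fst x) (fst (snd x)) (snd (snd x))) \<in> borel_measurable (A \<Otimes>\<^sub>M (B \<Otimes>\<^sub>M C))"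
  shows "(\<integral>\<^sup>+\<omega>. F (fst \<omega>) (fst (snd \<omega>)) (snd (snd \<omega>)) \<partial>(A \<Otimes>\<^sub>M (B \<Otimes>\<^sub>M C)))
          = (\<integral>\<^sup>+b. \<integral>\<^sup>+a. \<integral>\<^sup>+c. F a b c \<partial>C \<partial>A \<partial>B)"
proof -
  interpret A: sigma_finite_measure A by fact
  interpret C: sigma_finite_measure C by fact
  interpret BC: pair_sigma_finite B C using assms by (simp add: pair_sigma_finite_def)
  interpret AB: pair_sigma_finite A B using assms by (simp add: pair_sigma_finite_def)
  have F': "(\<lambda>x. F (fst (fst x)) (snd (fst x)) (snd x)) \<in> borel_measurable ((A \<Otimes>\<^sub>M B) \<Otimes>\<^sub>M C)"
    using measurable_comp[of "\<lambda>x. (fst (fst x), snd (fst x), snd x)", OF _ F] by (simp add: comp_def)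
  have "(\<integral>\<^sup>+\<omega>. F (fst \<omega>) (fst (snd \<omega>)) (snd (snd \<omega>)) \<partial>(A \<Otimes>\<^sub>M (B \<Otimes>\<^sub>M C)))
      = (\<integral>\<^sup>+a. \<integral>\<^sup>+bc. F a (fst bc) (snd bc) \<partial>(B \<Otimes>\<^sub>M C) \<partial>A)"
    using BC.nn_integral_fst[OF F] by simp
  also have "\<dots> = (\<integral>\<^sup>+a. \<integral>\<^sup>+b. \<integral>\<^sup>+c. F a b c \<partial>C \<partial>B \<partial>A)"
  proof (rule nn_integral_cong)
    fix a assume "a \<in> space A"
    from C.nn_integral_fst[OF measurable_Pair2[OF F this]]
    show "(\<integral>\<^sup>+bc. F a (fst bc) (snd bc) \<partial>(B \<Otimes>\<^sub>M C)) = (\<integral>\<^sup>+b. \<integral>\<^sup>+c. F a b c \<partial>C \<partial>B)"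
      by simp
  qed
  also have "\<dots> = (\<integral>\<^sup>+b. \<integral>\<^sup>+a. \<integral>\<^sup>+c. F a b c \<partial>C \<partial>A \<partial>B)"
    using C.borel_measurable_nn_integral_fst[OF F'] by (intro AB.Fubini'[symmetric]) (simp add: case_prod_beta')
  finally show ?thesis .
qed

lemma real_distribution_arrival_dist: "real_distribution arrival_dist"
  unfolding arrival_dist_def real_distribution_def real_distribution_axioms_def
  by (auto intro: prob_space_uniform_measure)

interpretation arrival: real_distribution arrival_dist
  by (rule real_distribution_arrival_dist)

lemma AE_arrival_dist_unit: "AE y in arrival_dist. 0 \<le> y \<and> y \<le> 1"
  unfolding arrival_dist_def by (rule AE_uniform_measureI) auto

lemma nn_integral_arrival_dist_step:
  assumes "0 \<le> y" "y \<le> 1" "0 \<le> a"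
  shows "(\<integral>\<^sup>+s. (if s \<le> y then ennreal a else 1) \<partial>arrival_dist) = ennreal (a * y + (1 - y))"
proof -
  have "(\<integral>\<^sup>+s. (if s \<le> y then ennreal a else 1) \<partial>arrival_dist)
      = (\<integral>\<^sup>+s. (if s \<le> y then ennreal a else 1) * indicator {0..1} s \<partial>lborel)"
    unfolding arrival_dist_def by (subst nn_integral_uniform_measure) (auto simp: divide_ennreal_def)
  also have "\<dots> = (\<integral>\<^sup>+s. ennreal a * indicator {0..y} s + indicator {y<..1} s \<partial>lborel)"
    using assms by (intro nn_integral_cong) (auto simp: indicator_def)
  also have "\<dots> = ennreal a * ennreal y + ennreal (1 - y)"
    using assms by (subst nn_integral_add) (auto simp: nn_integral_cmult_indicator)
  also have "\<dots> = ennreal (a * y + (1 - y))"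
    using assms by (simp add: ennreal_mult[symmetric] ennreal_plus[symmetric] del: ennreal_plus)
  finally show ?thesis .
qed

lemma integrable_arrival_dist_continuous:
  fixes f :: "real \<Rightarrow> real"
  assumes "continuous_on UNIV f"
  shows "integrable arrival_dist f"
proof -
  have "bounded (f ` {0..1})"
    using assms continuous_on_subset by (intro compact_imp_bounded compact_continuous_image) auto
  then obtain B where B: "\<And>y. y \<in> {0..1} \<Longrightarrow> norm (f y) \<le> B"
    unfolding bounded_iff by blast
  show ?thesis
    using AE_arrival_dist_unit B borel_measurable_continuous_onI[OF assms]
    by (intro arrival.integrable_const_bound[where B=B]) auto
qed

lemma integral_arrival_dist_FTC:
  fixes f F :: "real \<Rightarrow> real"
  assumes F: "\<And>x. 0 \<le> x \<Longrightarrow> x \<le> 1 \<Longrightarrow> (F has_real_derivative f x) (at x)"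
    and f: "continuous_on UNIV f"
  shows "(\<integral>y. f y \<partial>arrival_dist) = F 1 - F 0"
proof -
  have density: "arrival_dist = density lborel (\<lambda>x. ennreal (indicator {0..1} x))"
    by (simp add: arrival_dist_def uniform_measure_def divide_ennreal_def ennreal_indicator)
  have "(\<integral>y. f y \<partial>arrival_dist) = (\<integral>x. indicator {0..1} x *\<^sub>R f x \<partial>lborel)"
    unfolding density using borel_measurable_continuous_onI[OF f] by (intro integral_density) auto
  also have "\<dots> = F 1 - F 0"
    using F continuous_on_subset[OF f]
    by (intro integral_FTC_atLeastAtMost)
       (auto simp: has_real_derivative_iff_has_vector_derivative[symmetric] has_field_derivative_at_within)
  finally show ?thesis .
qed

lemma integral_arrival_dist_exp_minus: "(\<integral>y. exp (- y) \<partial>arrival_dist) = 1 - exp (-1)"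
proof -
  have "(\<integral>y. exp (- y) \<partial>arrival_dist) = (\<lambda>y. - exp (- y)) 1 - (\<lambda>y. - exp (- y)) 0"
    by (intro integral_arrival_dist_FTC continuous_intros) (auto intro!: derivative_eq_intros)
  then show ?thesis by simp
qed

lemma exp_mult_ln_le_linear:
  fixes q y :: real
  assumes "0 \<le> q" "q < 1" "0 \<le> y" "y \<le> 1"
  shows "exp (y * ln (1 - q)) \<le> 1 - q * y"
proof -
  have "exp ((1 - y) *\<^sub>R 0 + y *\<^sub>R ln (1 - q)) \<le> (1 - y) * exp 0 + y * exp (ln (1 - q))"
    using assms by (intro convex_onD[OF exp_convex]) auto
  then show ?thesis using assms by (simp add: algebra_simps)
qed

definition win_weight :: "(nat \<Rightarrow> real) \<Rightarrow> nat set \<Rightarrow> real" where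
  "win_weight q R = (\<integral>y. (\<Prod>j\<in>R. 1 - q j * y) \<partial>arrival_dist)"

lemma one_minus_mult_bounds:
  fixes q y :: real
  assumes "0 \<le> q" "q \<le> 1" "0 \<le> y" "y \<le> 1"
  shows "0 \<le> 1 - q * y" "1 - q * y \<le> 1"
  using assms by (auto simp: mult_le_one)

lemma win_weight_nonneg:
  assumes "\<And>j. j \<in> R \<Longrightarrow> 0 \<le> q j \<and> q j \<le> 1"
  shows "0 \<le> win_weight q R"
  unfolding win_weight_def
  using AE_arrival_dist_unit
  by (intro integral_nonneg_AE, eventually_elim)
     (use assms one_minus_mult_bounds in \<open>auto intro!: prod_nonneg\<close>)

lemma win_weight_ge:
  assumes q: "finite R" "\<And>j. j \<in> R \<Longrightarrow> 0 \<le> q j \<and> q j \<le> 1"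
    and P: "exp (-1) \<le> (\<Prod>j\<in>R. 1 - q j)"
  shows "1 - exp (-1) \<le> win_weight q R"
proof -
  have pos: "0 < 1 - q j" if "j \<in> R" for j
  proof (rule ccontr)
    assume "\<not> 0 < 1 - q j"
    then have "(\<Prod>j\<in>R. 1 - q j) = 0"
      using q(1) q(2)[OF that] that by (intro prod_zero) (auto intro!: bexI[of _ j])
    then show False using P exp_gt_zero[of "-1"] by linarith
  qed
  have "-1 \<le> ln (\<Prod>j\<in>R. 1 - q j)"
    using P pos by (subst ln_ge_iff) (auto intro: prod_pos)
  then have ln_sum: "-1 \<le> (\<Sum>j\<in>R. ln (1 - q j))"
    using ln_prod[OF q(1), of "\<lambda>j. 1 - q j"] pos by force
  have "exp (- y) \<le> (\<Prod>j\<in>R. 1 - q j * y)" if y: "0 \<le> y" "y \<le> 1" for y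
  proof -
    have "exp (- y) \<le> exp (y * (\<Sum>j\<in>R. ln (1 - q j)))"
      using mult_left_mono[OF ln_sum y(1)] by simp
    also have "\<dots> = (\<Prod>j\<in>R. exp (y * ln (1 - q j)))"
      by (simp add: sum_distrib_left exp_sum q(1))
    also have "\<dots> \<le> (\<Prod>j\<in>R. 1 - q j * y)"
      using q pos y by (intro prod_mono) (auto intro!: exp_mult_ln_le_linear)
    finally show ?thesis .
  qed
  then have "(\<integral>y. exp (- y) \<partial>arrival_dist) \<le> win_weight q R"
    unfolding win_weight_def using AE_arrival_dist_unit
    by (intro integral_mono_AE integrable_arrival_dist_continuous continuous_intros)
       (auto elim: eventually_mono)
  then show ?thesis by (simp add: integral_arrival_dist_exp_minus)
qed

lemma sum_mult_win_weight:
  assumes "finite I"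
  shows "(\<Sum>i\<in>I. q i * win_weight q (I - {i})) = 1 - (\<Prod>j\<in>I. 1 - q j)"
proof -
  have "(\<Sum>i\<in>I. q i * win_weight q (I - {i}))
      = (\<Sum>i\<in>I. \<integral>y. q i * (\<Prod>j\<in>I - {i}. 1 - q j * y) \<partial>arrival_dist)"
    by (simp add: win_weight_def)
  also have "\<dots> = (\<integral>y. (\<Sum>i\<in>I. q i * (\<Prod>j\<in>I - {i}. 1 - q j * y)) \<partial>arrival_dist)"
    by (rule Bochner_Integration.integral_sum[symmetric], rule integrable_arrival_dist_continuous, intro continuous_intros)
  also have "\<dots> = (- (\<Prod>j\<in>I. 1 - q j * 1)) - (- (\<Prod>j\<in>I. 1 - q j * 0))"
  proof (rule integral_arrival_dist_FTC)
    fix x :: real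
    have "((\<lambda>y. \<Prod>j\<in>I. 1 - q j * y) has_real_derivative (\<Sum>i\<in>I. - q i * (\<Prod>j\<in>I - {i}. 1 - q j * x))) (at x)"
      using assms by (intro has_field_derivative_prod) (auto intro!: derivative_eq_intros)
    from DERIV_minus[OF this]
    show "((\<lambda>y. - (\<Prod>j\<in>I. 1 - q j * y)) has_real_derivative (\<Sum>i\<in>I. q i * (\<Prod>j\<in>I - {i}. 1 - q j * x))) (at x)"
      by (simp add: sum_negf[symmetric])
  qed (intro continuous_intros)
  finally show ?thesis by simp
qed

definition pass_probability :: "real measure \<Rightarrow> real \<Rightarrow> real \<Rightarrow> real" where
  "pass_probability M \<tau> \<theta> = measure M {\<tau><..} + \<theta> * measure M {\<tau>}"

lemma (in real_distribution) cdf_eq_measure_lessThan_plus: "cdf M \<tau> = measure M {..<\<tau>} + measure M {\<tau>}"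
proof -
  have "{..\<tau>} = {..<\<tau>} \<union> {\<tau>}" by auto
  then show ?thesis using finite_measure_Union[of "{..<\<tau>}" "{\<tau>}"] by (simp add: cdf_def2)
qed

lemma (in real_distribution) one_minus_pass_probability:
  "1 - pass_probability M \<tau> \<theta> = measure M {..<\<tau>} + (1 - \<theta>) * measure M {\<tau>}"
proof -
  have "UNIV - {..\<tau>} = {\<tau><..}" by auto
  then have "measure M {\<tau><..} = 1 - cdf M \<tau>"
    using prob_compl[of "{..\<tau>}"] by (simp add: cdf_def2)
  then show ?thesis by (simp add: pass_probability_def cdf_eq_measure_lessThan_plus algebra_simps)
qed

text \<open>The threshold is the point where the probability that nobody passes crosses \<open>1/e\<close>; the
  tie probability interpolates across the atoms of the value distributions at that point.\<close>
lemma exists_balanced_threshold: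
  fixes D :: "nat \<Rightarrow> real measure"
  assumes D: "\<And>j. real_distribution (D j)"
  obtains \<tau> \<theta> where "0 \<le> \<tau>" "0 \<le> \<theta>" "\<theta> \<le> 1"
    "exp (-1) \<le> (\<Prod>j<n. 1 - pass_probability (D j) \<tau> \<theta>)"
    "\<tau> = 0 \<or> (\<Prod>j<n. 1 - pass_probability (D j) \<tau> \<theta>) \<le> exp (-1)"
proof -
  have F: "finite_borel_measure (D j)" for j
    using D by (rule real_distribution.finite_borel_measure_M)
  define \<phi> where "\<phi> \<tau> \<theta> = (\<Prod>j<n. measure (D j) {..<\<tau>} + (1 - \<theta>) * measure (D j) {\<tau>})" for \<tau> \<theta>
  define G where "G \<tau> = (\<Prod>j<n. cdf (D j) \<tau>)" for \<tau>
  have \<phi>_eq: "(\<Prod>j<n. 1 - pass_probability (D j) \<tau> \<theta>) = \<phi> \<tau> \<theta>" for \<tau> \<theta>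
    by (simp add: \<phi>_def real_distribution.one_minus_pass_probability[OF D])
  have \<phi>0: "\<phi> \<tau> 0 = G \<tau>" for \<tau>
    by (simp add: \<phi>_def G_def real_distribution.cdf_eq_measure_lessThan_plus[OF D])
  show ?thesis
  proof (cases "exp (-1) \<le> G 0")
    case True
    then show ?thesis by (intro that[of 0 0]) (simp_all add: \<phi>_eq \<phi>0)
  next
    case False
    have G_mono: "G a \<le> G b" if "a \<le> b" for a b
      unfolding G_def using that D
      by (intro prod_mono) (auto intro: finite_borel_measure.cdf_nonneg[OF F]
                                       finite_borel_measure.cdf_nondecreasing[OF F])
    define S where "S = {\<tau>. exp (-1) \<le> G \<tau>}"
    have S_pos: "0 < \<tau>" if "\<tau> \<in> S" for \<tau>
      using that False G_mono[of \<tau> 0] by (force simp: S_def)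
    have "(G \<longlongrightarrow> 1) at_top"
      unfolding G_def using tendsto_prod[OF real_distribution.cdf_lim_at_top_prob[OF D]] by simp
    then have "eventually (\<lambda>\<tau>. exp (-1) < G \<tau>) at_top"
      by (rule order_tendstoD) simp
    then obtain \<tau>1 where "\<tau>1 \<in> S"
      by (auto simp: S_def eventually_at_top_linorder intro: less_imp_le)
    then have S: "S \<noteq> {}" "bdd_below S"
      using S_pos by (auto intro!: bdd_belowI[of _ 0] less_imp_le)
    define \<tau>0 where "\<tau>0 = Inf S"
    have "0 \<le> \<tau>0" unfolding \<tau>0_def using S S_pos by (intro cInf_greatest) (auto intro: less_imp_le)
    have above: "\<tau> \<in> S" if "\<tau>0 < \<tau>" for \<tau>
    proof -
      obtain s where "s \<in> S" "s < \<tau>" using \<open>\<tau>0 < \<tau>\<close> cInf_less_iff[OF S] by (auto simp: \<tau>0_def)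
      then show ?thesis using G_mono[of s \<tau>] by (auto simp: S_def)
    qed
    have below: "\<tau> \<notin> S" if "\<tau> < \<tau>0" for \<tau>
      using that cInf_lower[OF _ S(2)] by (force simp: \<tau>0_def)
    have "continuous (at_right \<tau>0) G"
      unfolding G_def using finite_borel_measure.cdf_is_right_cont[OF F] by (intro continuous_prod) auto
    then have "(G \<longlongrightarrow> G \<tau>0) (at_right \<tau>0)"
      by (simp add: continuous_within)
    then have lower: "exp (-1) \<le> \<phi> \<tau>0 0"
      unfolding \<phi>0 using above
      by (intro tendsto_lowerbound) (auto simp: S_def intro: eventually_mono[OF eventually_at_right_less])
    have left_limit: "(G \<longlongrightarrow> \<phi> \<tau>0 1) (at_left \<tau>0)"
      unfolding G_def \<phi>_def using finite_borel_measure.cdf_at_left[OF F] by (auto intro!: tendsto_prod)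
    have "eventually (\<lambda>\<tau>. \<tau> \<in> {\<tau>0 - 1<..<\<tau>0}) (at_left \<tau>0)"
      by (rule eventually_at_left_real) simp
    then have "eventually (\<lambda>\<tau>. G \<tau> \<le> exp (-1)) (at_left \<tau>0)"
      by eventually_elim (auto simp: S_def dest!: below)
    then have upper: "\<phi> \<tau>0 1 \<le> exp (-1)"
      using left_limit by (intro tendsto_upperbound) auto
    have "continuous_on {0..1} (\<phi> \<tau>0)"
      unfolding \<phi>_def by (intro continuous_intros)
    then obtain \<theta> where "0 \<le> \<theta>" "\<theta> \<le> 1" "\<phi> \<tau>0 \<theta> = exp (-1)"
      using IVT2'[of "\<phi> \<tau>0", OF upper lower] by auto
    then show ?thesis using \<open>0 \<le> \<tau>0\<close> by (intro that[of \<tau>0 \<theta>]) (simp_all add: \<phi>_eq)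
  qed
qed

lemma nn_integral_arrivals_before:
  assumes "finite R" "\<And>j. j \<in> R \<Longrightarrow> 0 \<le> q j \<and> q j \<le> 1" "0 \<le> y" "y \<le> 1"
  shows "(\<integral>\<^sup>+t. (\<Prod>j\<in>R. if t j \<le> y then ennreal (1 - q j) else 1) \<partial>PiM R (\<lambda>_. arrival_dist))
           = ennreal (\<Prod>j\<in>R. 1 - q j * y)"
proof -
  interpret product_prob_space "\<lambda>_. arrival_dist" R
    by (simp add: product_prob_space_def product_sigma_finite_def prob_space_imp_sigma_finite
                  arrival.prob_space_axioms product_prob_space_axioms_def)
  have "(\<integral>\<^sup>+t. (\<Prod>j\<in>R. if t j \<le> y then ennreal (1 - q j) else 1) \<partial>PiM R (\<lambda>_. arrival_dist))
      = (\<Prod>j\<in>R. \<integral>\<^sup>+s. (if s \<le> y then ennreal (1 - q j) else 1) \<partial>arrival_dist)"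
    using assms(1) by (intro product_nn_integral_prod) auto
  also have "\<dots> = (\<Prod>j\<in>R. ennreal (1 - q j * y))"
    using assms by (intro prod.cong refl) (subst nn_integral_arrival_dist_step, auto simp: algebra_simps)
  finally show ?thesis
    using assms one_minus_mult_bounds by (simp add: prod_ennreal)
qed

lemma nn_integral_win_weight:
  assumes "\<And>j. j \<in> R \<Longrightarrow> 0 \<le> q j \<and> q j \<le> 1"
  shows "(\<integral>\<^sup>+y. ennreal (\<Prod>j\<in>R. 1 - q j * y) \<partial>arrival_dist) = ennreal (win_weight q R)"
  unfolding win_weight_def using AE_arrival_dist_unit
  by (intro nn_integral_eq_integral integrable_arrival_dist_continuous continuous_intros, eventually_elim)
     (use assms one_minus_mult_bounds in \<open>auto intro!: prod_nonneg\<close>)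

lemma nn_integral_arrivals_win_weight:
  assumes I: "finite I" "i \<in> I" and q: "\<And>j. j \<in> I \<Longrightarrow> 0 \<le> q j \<and> q j \<le> 1"
  shows "(\<integral>\<^sup>+t. (\<Prod>j\<in>I - {i}. if t j \<le> t i then ennreal (1 - q j) else 1) \<partial>PiM I (\<lambda>_. arrival_dist))
           = ennreal (win_weight q (I - {i}))"
proof -
  interpret product_sigma_finite "\<lambda>_. arrival_dist"
    by (simp add: product_sigma_finite_def prob_space_imp_sigma_finite arrival.prob_space_axioms)
  define R where "R = I - {i}"
  have R: "I = insert i R" "finite R" "i \<notin> R" "\<And>j. j \<in> R \<Longrightarrow> 0 \<le> q j \<and> q j \<le> 1"
    using I q by (auto simp: R_def)
  have "(\<integral>\<^sup>+t. (\<Prod>j\<in>R. if t j \<le> t i then ennreal (1 - q j) else 1) \<partial>PiM I (\<lambda>_. arrival_dist))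
      = (\<integral>\<^sup>+y. \<integral>\<^sup>+t. (\<Prod>j\<in>R. if t j \<le> y then ennreal (1 - q j) else 1) \<partial>PiM R (\<lambda>_. arrival_dist) \<partial>arrival_dist)"
    unfolding R(1) using R(2,3)
    by (subst product_nn_integral_insert_rev) (auto intro!: nn_integral_cong prod.cong)
  also have "\<dots> = (\<integral>\<^sup>+y. ennreal (\<Prod>j\<in>R. 1 - q j * y) \<partial>arrival_dist)"
    using AE_arrival_dist_unit
    by (intro nn_integral_cong_AE, eventually_elim) (use R nn_integral_arrivals_before in auto)
  finally show ?thesis
    unfolding R_def[symmetric] using nn_integral_win_weight[OF R(4)] by simp
qed

locale fixed_threshold =
  fixes n :: nat and D :: "nat \<Rightarrow> real measure" and \<tau> \<theta> :: real
  assumes distr: "\<And>j. real_distribution (D j)"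
    and integrable_D: "\<And>j. integrable (D j) (\<lambda>x. x)"
    and threshold_nonneg: "0 \<le> \<tau>" and tie_nonneg: "0 \<le> \<theta>" and tie_le_1: "\<theta> \<le> 1"
begin

lemma sets_D [measurable_cong]: "sets (D j) = sets borel"
  using distr by (rule real_distribution.events_eq_borel)

abbreviation "value_space \<equiv> PiM {..<n} D"
abbreviation "arrival_space \<equiv> PiM {..<n} (\<lambda>_. arrival_dist)"
abbreviation "coin_space \<equiv> PiM {..<n} (\<lambda>_. measure_pmf (bernoulli_pmf \<theta>))"

lemma ps_space_eq: "ps_space n D \<theta> = value_space \<Otimes>\<^sub>M (arrival_space \<Otimes>\<^sub>M coin_space)"
  by (simp add: ps_space_def)

definition passes :: "real \<Rightarrow> bool \<Rightarrow> bool" where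
  "passes x b \<longleftrightarrow> \<tau> < x \<or> (x = \<tau> \<and> b)"

definition pass_weight :: "real \<Rightarrow> real" where
  "pass_weight x = (if \<tau> < x then 1 else if x = \<tau> then \<theta> else 0)"

abbreviation q :: "nat \<Rightarrow> real" where
  "q j \<equiv> pass_probability (D j) \<tau> \<theta>"

definition accepted_mean :: "nat \<Rightarrow> real" where
  "accepted_mean j = (\<integral>x. x * pass_weight x \<partial>D j)"

definition surplus :: "nat \<Rightarrow> real" where
  "surplus j = (\<integral>x. max 0 (x - \<tau>) \<partial>D j)"

definition winner_value :: "nat \<Rightarrow> (nat \<Rightarrow> real) \<times> (nat \<Rightarrow> real) \<times> (nat \<Rightarrow> bool) \<Rightarrow> real" where
  "winner_value i \<omega> = (case \<omega> of (v, t, c) \<Rightarrow>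
     if passes (v i) (c i) \<and> (\<forall>j\<in>{..<n}. j \<noteq> i \<longrightarrow> passes (v j) (c j) \<longrightarrow> t i < t j) then v i else 0)"

text \<open>Writing the value won by buyer \<open>i\<close> as a product of factors, each depending on the value
  and coin of a single buyer, lets the integral over values and coins factorise.\<close>
definition win_factor :: "nat \<Rightarrow> nat \<Rightarrow> real \<Rightarrow> (nat \<Rightarrow> real) \<Rightarrow> bool \<Rightarrow> ennreal" where
  "win_factor i j x t b = (if j = i then ennreal (if passes x b then x else 0)
                           else if passes x b \<and> t j \<le> t i then 0 else 1)"

lemma winner_value_nonneg: "0 \<le> winner_value i \<omega>"
  using threshold_nonneg by (auto simp: winner_value_def passes_def split: prod.splits)

lemma borel_measurable_winner_value:
  "i < n \<Longrightarrow> winner_value i \<in> borel_measurable (value_space \<Otimes>\<^sub>M (arrival_space \<Otimes>\<^sub>M coin_space))"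
  unfolding winner_value_def passes_def by measurable

lemma ft_value_eq_sum_winner_value: "ft_value n \<tau> \<omega> = (\<Sum>i<n. winner_value i \<omega>)"
proof -
  obtain v t c where \<omega>: "\<omega> = (v, t, c)" by (metis prod.collapse)
  have passing: "ft_accepting n \<tau> v c = {i\<in>{..<n}. passes (v i) (c i)}"
    by (auto simp: ft_accepting_def passes_def)
  have "(\<Sum>i<n. winner_value i \<omega>) = (\<Sum>i\<in>{i\<in>{..<n}. passes (v i) (c i)}. winner_value i \<omega>)"
    by (rule sum.mono_neutral_right) (auto simp: winner_value_def \<omega>)
  also have "\<dots> = ft_value n \<tau> \<omega>"
    unfolding ft_value_def \<omega> prod.case passing by (intro sum.cong refl) (auto simp: winner_value_def)
  finally show ?thesis by simp
qed

lemma winner_value_eq_prod: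
  assumes "i < n"
  shows "ennreal (winner_value i (v, t, c)) = (\<Prod>j<n. win_factor i j (v j) t (c j))"
proof -
  have "(\<Prod>j\<in>{..<n} - {i}. win_factor i j (v j) t (c j)) =
      (if \<forall>j\<in>{..<n}. j \<noteq> i \<longrightarrow> passes (v j) (c j) \<longrightarrow> t i < t j then 1 else 0)"
    by (auto simp: win_factor_def not_less intro!: prod.neutral prod_zero)
  then show ?thesis
    using assms by (auto simp: prod.remove winner_value_def win_factor_def)
qed

lemma nn_integral_coin_win_factor:
  "(\<integral>\<^sup>+b. win_factor i j x t b \<partial>bernoulli_pmf \<theta>) =
     (if j = i then ennreal (x * pass_weight x) else if t j \<le> t i then ennreal (1 - pass_weight x) else 1)"
proof -
  have "(\<integral>\<^sup>+b. win_factor i j x t b \<partial>bernoulli_pmf \<theta>) = win_factor i j x t True * \<theta> + win_factor i j x t False * (1 - \<theta>)"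
    using tie_nonneg tie_le_1 by (intro nn_integral_bernoulli_pmf) auto
  moreover have "ennreal (\<theta> * \<tau>) + ennreal (\<tau> - \<theta> * \<tau>) = ennreal \<tau>"
    using tie_nonneg tie_le_1 threshold_nonneg mult_left_le_one_le[of \<tau> \<theta>]
    by (subst ennreal_plus[symmetric]) auto
  ultimately show ?thesis
    using threshold_nonneg tie_nonneg tie_le_1
    by (auto simp: win_factor_def passes_def pass_weight_def ennreal_mult'[symmetric]
                   ennreal_plus[symmetric] algebra_simps simp del: ennreal_plus)
qed

lemma pass_weight_unit: "0 \<le> pass_weight x" "pass_weight x \<le> 1"
  using tie_nonneg tie_le_1 by (auto simp: pass_weight_def)

lemma mult_pass_weight_nonneg: "0 \<le> x * pass_weight x"
  using threshold_nonneg tie_nonneg by (auto simp: pass_weight_def)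

lemma borel_measurable_pass_weight [measurable]: "pass_weight \<in> borel_measurable borel"
  unfolding pass_weight_def by measurable

lemma integrable_pass_weight: "integrable (D j) pass_weight"
proof -
  interpret real_distribution "D j" by (rule distr)
  show ?thesis using pass_weight_unit by (intro integrable_const_bound[where B=1]) auto
qed

lemma integrable_mult_pass_weight: "integrable (D j) (\<lambda>x. x * pass_weight x)"
  using pass_weight_unit
  by (intro Bochner_Integration.integrable_bound[OF integrable_D]) (auto simp: abs_mult mult_right_le_one_le)

lemma integral_pass_weight: "(\<integral>x. pass_weight x \<partial>D j) = q j"
proof -
  interpret real_distribution "D j" by (rule distr)
  have "(\<integral>x. pass_weight x \<partial>D j) = (\<integral>x. indicator {\<tau><..} x + \<theta> * indicator {\<tau>} x \<partial>D j)"
    by (intro Bochner_Integration.integral_cong) (auto simp: pass_weight_def indicator_def)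
  also have "\<dots> = q j"
    by (subst Bochner_Integration.integral_add)
       (auto simp: pass_probability_def emeasure_finite less_top[symmetric])
  finally show ?thesis .
qed

lemma pass_probability_unit: "0 \<le> q j" "q j \<le> 1"
proof -
  interpret real_distribution "D j" by (rule distr)
  show "0 \<le> q j"
    unfolding integral_pass_weight[symmetric] using pass_weight_unit by (simp add: integral_nonneg)
  have "(\<integral>x. pass_weight x \<partial>D j) \<le> (\<integral>x. 1 \<partial>D j)"
    using pass_weight_unit by (intro integral_mono integrable_pass_weight) auto
  then show "q j \<le> 1" using prob_space by (simp add: integral_pass_weight)
qed

lemma accepted_mean_nonneg: "0 \<le> accepted_mean j"
  unfolding accepted_mean_def by (simp add: mult_pass_weight_nonneg)

lemma nn_integral_mult_pass_weight: "(\<integral>\<^sup>+x. ennreal (x * pass_weight x) \<partial>D j) = ennreal (accepted_mean j)"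
  unfolding accepted_mean_def
  by (rule nn_integral_eq_integral[OF integrable_mult_pass_weight]) (simp add: mult_pass_weight_nonneg)

lemma nn_integral_one_minus_pass_weight: "(\<integral>\<^sup>+x. ennreal (1 - pass_weight x) \<partial>D j) = ennreal (1 - q j)"
proof -
  interpret real_distribution "D j" by (rule distr)
  have "(\<integral>\<^sup>+x. ennreal (1 - pass_weight x) \<partial>D j) = ennreal (\<integral>x. 1 - pass_weight x \<partial>D j)"
    using integrable_pass_weight pass_weight_unit by (intro nn_integral_eq_integral) auto
  then show ?thesis using integrable_pass_weight prob_space by (simp add: integral_pass_weight)
qed

lemma nn_integral_values_coins:
  assumes "i < n"
  shows "(\<integral>\<^sup>+v. \<integral>\<^sup>+c. (\<Prod>j<n. win_factor i j (v j) t (c j)) \<partial>coin_space \<partial>value_space)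
       = ennreal (accepted_mean i) * (\<Prod>j\<in>{..<n} - {i}. if t j \<le> t i then ennreal (1 - q j) else 1)"
proof -
  interpret C: product_sigma_finite "\<lambda>_. measure_pmf (bernoulli_pmf \<theta>)"
    by (simp add: product_sigma_finite_def prob_space_imp_sigma_finite prob_space_measure_pmf)
  interpret V: product_sigma_finite D
    using distr by (simp add: product_sigma_finite_def prob_space_imp_sigma_finite real_distribution_def)
  define h where "h j x = (if j = i then ennreal (x * pass_weight x)
                          else if t j \<le> t i then ennreal (1 - pass_weight x) else 1)" for j x
  have "(\<integral>\<^sup>+v. \<integral>\<^sup>+c. (\<Prod>j<n. win_factor i j (v j) t (c j)) \<partial>coin_space \<partial>value_space) = (\<integral>\<^sup>+v. (\<Prod>j<n. h j (v j)) \<partial>value_space)"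
    by (intro nn_integral_cong) (subst C.product_nn_integral_prod, auto simp: nn_integral_coin_win_factor h_def)
  also have "\<dots> = (\<Prod>j<n. \<integral>\<^sup>+x. h j x \<partial>D j)"
    by (intro V.product_nn_integral_prod) (auto simp: h_def)
  also have "\<dots> = (\<Prod>j<n. if j = i then ennreal (accepted_mean i) else if t j \<le> t i then ennreal (1 - q j) else 1)"
    using distr
    by (intro prod.cong refl)
       (auto simp: h_def nn_integral_mult_pass_weight nn_integral_one_minus_pass_weight
                   prob_space.emeasure_space_1 real_distribution_def)
  finally show ?thesis
    using assms by (simp add: prod.remove)
qed

lemma nn_integral_winner_value:
  assumes i: "i < n"
  shows "(\<integral>\<^sup>+\<omega>. ennreal (winner_value i \<omega>) \<partial>ps_space n D \<theta>)
           = ennreal (accepted_mean i * win_weight q ({..<n} - {i}))"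
proof -
  have prob: "prob_space value_space" "prob_space arrival_space" "prob_space coin_space"
    using distr by (auto intro!: prob_space_PiM arrival.prob_space_axioms prob_space_measure_pmf
                         simp: real_distribution_def)
  have "(\<integral>\<^sup>+\<omega>. ennreal (winner_value i \<omega>) \<partial>ps_space n D \<theta>)
      = (\<integral>\<^sup>+\<omega>. (\<Prod>j<n. win_factor i j (fst \<omega> j) (fst (snd \<omega>)) (snd (snd \<omega>) j)) \<partial>ps_space n D \<theta>)"
    using winner_value_eq_prod[OF i] by (intro nn_integral_cong) (metis prod.collapse)
  also have "\<dots> = (\<integral>\<^sup>+t. \<integral>\<^sup>+v. \<integral>\<^sup>+c. (\<Prod>j<n. win_factor i j (v j) t (c j)) \<partial>coin_space \<partial>value_space \<partial>arrival_space)"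
  proof (unfold ps_space_eq, intro triple_product_nn_integral prob_space_imp_sigma_finite prob)
    show "(\<lambda>\<omega>. \<Prod>j<n. win_factor i j (fst \<omega> j) (fst (snd \<omega>)) (snd (snd \<omega>) j))
            \<in> borel_measurable (value_space \<Otimes>\<^sub>M (arrival_space \<Otimes>\<^sub>M coin_space))"
    proof (subst measurable_cong)
      show "(\<Prod>j<n. win_factor i j (fst \<omega> j) (fst (snd \<omega>)) (snd (snd \<omega>) j)) = ennreal (winner_value i \<omega>)"
        for \<omega> using winner_value_eq_prod[OF i] by (metis prod.collapse)
      show "(\<lambda>\<omega>. ennreal (winner_value i \<omega>)) \<in> borel_measurable (value_space \<Otimes>\<^sub>M (arrival_space \<Otimes>\<^sub>M coin_space))"
        using borel_measurable_winner_value[OF i] by measurable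
    qed
  qed
  also have "\<dots> = (\<integral>\<^sup>+t. ennreal (accepted_mean i) * (\<Prod>j\<in>{..<n} - {i}. if t j \<le> t i then ennreal (1 - q j) else 1) \<partial>arrival_space)"
    by (intro nn_integral_cong nn_integral_values_coins i)
  also have "\<dots> = ennreal (accepted_mean i) * ennreal (win_weight q ({..<n} - {i}))"
    using i pass_probability_unit by (subst nn_integral_cmult) (auto simp: nn_integral_arrivals_win_weight)
  finally show ?thesis
    using accepted_mean_nonneg by (simp add: ennreal_mult')
qed

lemma integral_ft_value:
  "(\<integral>\<omega>. ft_value n \<tau> \<omega> \<partial>ps_space n D \<theta>) = (\<Sum>i<n. accepted_mean i * win_weight q ({..<n} - {i}))"
proof -
  have "has_bochner_integral (ps_space n D \<theta>) (winner_value i) (accepted_mean i * win_weight q ({..<n} - {i}))"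
    if "i < n" for i
    using borel_measurable_winner_value[OF that] nn_integral_winner_value[OF that] winner_value_nonneg
      accepted_mean_nonneg win_weight_nonneg pass_probability_unit
    by (intro has_bochner_integral_nn_integral) (auto simp: ps_space_eq)
  then have "has_bochner_integral (ps_space n D \<theta>) (\<lambda>\<omega>. \<Sum>i<n. winner_value i \<omega>)
               (\<Sum>i<n. accepted_mean i * win_weight q ({..<n} - {i}))"
    by (intro has_bochner_integral_sum) auto
  then show ?thesis by (simp add: ft_value_eq_sum_winner_value has_bochner_integral_integral_eq)
qed

lemma integrable_surplus: "integrable (D j) (\<lambda>x. max 0 (x - \<tau>))"
proof -
  interpret real_distribution "D j" by (rule distr)
  show ?thesis using integrable_D[of j] by (intro integrable_max) auto
qed

lemma surplus_nonneg: "0 \<le> surplus j"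
  unfolding surplus_def by (simp add: integral_nonneg)

lemma accepted_mean_eq: "accepted_mean j = \<tau> * q j + surplus j"
proof -
  have "accepted_mean j = (\<integral>x. \<tau> * pass_weight x + max 0 (x - \<tau>) \<partial>D j)"
    unfolding accepted_mean_def by (intro Bochner_Integration.integral_cong) (auto simp: pass_weight_def)
  then show ?thesis
    using integrable_pass_weight integrable_surplus by (simp add: integral_pass_weight surplus_def)
qed

text \<open>Pointwise, a nonnegative value is at most \<open>\<tau>\<close> times the indicator of being positive
  plus its excess over \<open>\<tau>\<close>.\<close>
lemma mean_le_threshold_plus_surplus:
  assumes "AE x in D j. 0 \<le> x"
  shows "(\<integral>x. x \<partial>D j) \<le> \<tau> * measure (D j) {0<..} + surplus j"
proof -
  interpret real_distribution "D j" by (rule distr)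
  have indicator: "integrable (D j) (indicator {0<..} :: real \<Rightarrow> real)"
    by (intro integrable_real_indicator) (auto simp: emeasure_eq_measure)
  then have bound: "integrable (D j) (\<lambda>x. \<tau> * indicator {0<..} x + max 0 (x - \<tau>))"
    using integrable_surplus[of j] by simp
  have "AE x in D j. x \<le> \<tau> * indicator {0<..} x + max 0 (x - \<tau>)"
    using assms by eventually_elim (auto simp: indicator_def)
  with integrable_D[of j] bound
  have "(\<integral>x. x \<partial>D j) \<le> (\<integral>x. \<tau> * indicator {0<..} x + max 0 (x - \<tau>) \<partial>D j)"
    by (rule integral_mono_AE)
  also have "\<dots> = \<tau> * measure (D j) {0<..} + surplus j"
    using indicator integrable_surplus[of j] by (simp add: surplus_def)
  finally show ?thesis .
qed

lemma prod_one_minus_le_remove: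
  assumes "i < n"
  shows "(\<Prod>j<n. 1 - q j) \<le> (\<Prod>j\<in>{..<n} - {i}. 1 - q j)"
proof -
  have "0 \<le> (\<Prod>j\<in>{..<n} - {i}. 1 - q j)"
    using pass_probability_unit by (intro prod_nonneg) auto
  then show ?thesis
    using assms pass_probability_unit[of i] by (simp add: prod.remove mult_left_le_one_le)
qed

lemma expected_ft_value_ge:
  assumes balanced: "exp (-1) \<le> (\<Prod>j<n. 1 - q j)" "\<tau> = 0 \<or> (\<Prod>j<n. 1 - q j) \<le> exp (-1)"
    and nonneg: "\<And>i. i < n \<Longrightarrow> AE x in D i. 0 \<le> x"
    and small: "(\<Sum>i<n. measure (D i) {0<..}) \<le> 1"
  shows "(1 - 1 / exp 1) * (\<Sum>i<n. \<integral>x. x \<partial>D i) \<le> (\<integral>\<omega>. ft_value n \<tau> \<omega> \<partial>ps_space n D \<theta>)"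
proof -
  let ?W = "\<lambda>i. win_weight q ({..<n} - {i})"
  have "(\<integral>\<omega>. ft_value n \<tau> \<omega> \<partial>ps_space n D \<theta>) = \<tau> * (\<Sum>i<n. q i * ?W i) + (\<Sum>i<n. surplus i * ?W i)"
    by (simp add: integral_ft_value accepted_mean_eq algebra_simps sum.distrib sum_distrib_left)
  also have "\<dots> = \<tau> * (1 - (\<Prod>j<n. 1 - q j)) + (\<Sum>i<n. surplus i * ?W i)"
    by (simp add: sum_mult_win_weight)
  finally have algorithm: "(\<integral>\<omega>. ft_value n \<tau> \<omega> \<partial>ps_space n D \<theta>) = \<dots>" .
  have "\<tau> * (1 - exp (-1)) \<le> \<tau> * (1 - (\<Prod>j<n. 1 - q j))"
    using balanced threshold_nonneg by auto
  moreover have "(\<Sum>i<n. surplus i * (1 - exp (-1))) \<le> (\<Sum>i<n. surplus i * ?W i)"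
    using balanced(1) prod_one_minus_le_remove pass_probability_unit surplus_nonneg
    by (intro sum_mono mult_left_mono win_weight_ge) force+
  ultimately have "(1 - exp (-1)) * (\<tau> + (\<Sum>i<n. surplus i)) \<le> (\<integral>\<omega>. ft_value n \<tau> \<omega> \<partial>ps_space n D \<theta>)"
    unfolding algorithm by (simp add: algebra_simps sum_distrib_left)
  moreover have "(\<Sum>i<n. \<integral>x. x \<partial>D i) \<le> \<tau> * (\<Sum>i<n. measure (D i) {0<..}) + (\<Sum>i<n. surplus i)"
    unfolding sum_distrib_left sum.distrib[symmetric]
    by (intro sum_mono mean_le_threshold_plus_surplus nonneg) simp
  then have "(\<Sum>i<n. \<integral>x. x \<partial>D i) \<le> \<tau> + (\<Sum>i<n. surplus i)"
    using small threshold_nonneg mult_left_le[of _ \<tau>] by (smt (verit))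
  then have "(1 - 1 / exp 1) * (\<Sum>i<n. \<integral>x. x \<partial>D i) \<le> (1 - exp (-1)) * (\<tau> + (\<Sum>i<n. surplus i))"
    by (simp add: exp_minus inverse_eq_divide mult_left_mono)
  ultimately show ?thesis by linarith
qed

end

lemma fixed_threshold_guarantee:
  fixes D :: "nat \<Rightarrow> real measure"
  assumes distr: "\<And>j. real_distribution (D j)" and integrable: "\<And>j. integrable (D j) (\<lambda>x. x)"
    and nonneg: "\<And>i. i < n \<Longrightarrow> AE x in D i. 0 \<le> x"
    and small: "(\<Sum>i<n. measure (D i) {0<..}) \<le> 1"
  shows "\<exists>\<tau> \<theta>. 0 \<le> \<theta> \<and> \<theta> \<le> 1 \<and>
           (1 - 1 / exp 1) * (\<Sum>i<n. \<integral>x. x \<partial>D i) \<le> (\<integral>\<omega>. ft_value n \<tau> \<omega> \<partial>ps_space n D \<theta>)"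
proof -
  obtain \<tau> \<theta> where \<tau>\<theta>: "0 \<le> \<tau>" "0 \<le> \<theta>" "\<theta> \<le> 1"
    and balanced: "exp (-1) \<le> (\<Prod>j<n. 1 - pass_probability (D j) \<tau> \<theta>)"
      "\<tau> = 0 \<or> (\<Prod>j<n. 1 - pass_probability (D j) \<tau> \<theta>) \<le> exp (-1)"
    by (rule exists_balanced_threshold[OF distr])
  interpret fixed_threshold n D \<tau> \<theta>
    using distr integrable \<tau>\<theta> by (simp add: fixed_threshold_def)
  show ?thesis
    using \<tau>\<theta> expected_ft_value_ge[OF balanced nonneg small] by (intro exI[of _ \<tau>] exI[of _ \<theta>]) simp
qed

lemma real_distribution_return_borel: "real_distribution (return borel (x :: real))"
  by (auto simp: real_distribution_def real_distribution_axioms_def intro: prob_space_return)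

lemma integrable_return_borel: "integrable (return borel (x :: real)) (\<lambda>y. y)"
proof -
  interpret real_distribution "return borel x" by (rule real_distribution_return_borel)
  show ?thesis by (rule integrable_const_bound[where B="\<bar>x\<bar>"]) (auto simp: AE_return)
qed

theorem mainTheorem13:
  fixes n :: nat and D :: "nat \<Rightarrow> real measure"
  assumes prob: "\<And>i. i < n \<Longrightarrow> prob_space (D i)"
    and borel: "\<And>i. i < n \<Longrightarrow> sets (D i) = sets borel"
    and nonneg: "\<And>i. i < n \<Longrightarrow> AE x in D i. 0 \<le> x"
    and finexp: "\<And>i. i < n \<Longrightarrow> integrable (D i) (\<lambda>x. x)"
    and small: "(\<Sum>i<n. measure (D i) {0<..}) \<le> 1"
  shows "\<exists>\<tau>::real. \<exists>\<theta>::real. 0 \<le> \<theta> \<and> \<theta> \<le> 1 \<and>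
           (\<integral>\<omega>. ft_value n \<tau> \<omega> \<partial>ps_space n D \<theta>)
             \<ge> (1 - 1 / exp 1) * (\<Sum>i<n. \<integral>x. x \<partial>D i)"
proof -
  text \<open>The locale needs a distribution at every index; indices \<open>\<ge> n\<close> do not occur in the model,
    so they get the point mass at \<open>0\<close>.\<close>
  define D' where "D' j = (if j < n then D j else return borel 0)" for j
  have D': "real_distribution (D' j)" "integrable (D' j) (\<lambda>x. x)" for j
    using prob borel finexp real_distribution_return_borel integrable_return_borel
    by (auto simp: D'_def real_distribution_def real_distribution_axioms_def)
  have same: "D' i = D i" if "i < n" for i
    using that by (simp add: D'_def)
  have "ps_space n D' = ps_space n D"
    unfolding ps_space_def by (intro ext arg_cong2[where f=pair_measure] PiM_cong refl) (simp add: same)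
  moreover have "(\<Sum>i<n. \<integral>x. x \<partial>D' i) = (\<Sum>i<n. \<integral>x. x \<partial>D i)"
    by (intro sum.cong refl) (simp add: same)
  moreover have measure_eq: "(\<Sum>i<n. measure (D' i) {0<..}) = (\<Sum>i<n. measure (D i) {0<..})"
    by (intro sum.cong refl) (simp add: same)
  moreover have "\<exists>\<tau> \<theta>. 0 \<le> \<theta> \<and> \<theta> \<le> 1 \<and> (1 - 1 / exp 1) * (\<Sum>i<n. \<integral>x. x \<partial>D' i)
                   \<le> (\<integral>\<omega>. ft_value n \<tau> \<omega> \<partial>ps_space n D' \<theta>)"
  proof (rule fixed_threshold_guarantee[OF D'])
    show "AE x in D' i. 0 \<le> x" if "i < n" for i
      using nonneg[OF that] same[OF that] by metis
  qed (simp add: measure_eq small)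
  ultimately show ?thesis by simp
qed

end
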